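(* Let $A_1,\ldots,A_n$ be events in a probability space and let $X$ be the number of these events that occur. Let $k$ be an integer with $1\le k<n$. For distinct indices $i_1,\ldots,i_k\in\{1,\ldots,n\}$ and $1\le s\le n-k$, let $W_s(i_1,\ldots,i_k)$ be the $s$-th largest of the $n-k$ values $P(A_{i_1}\cdots A_{i_k}A_j)$, $j\in\{1,\ldots,n\}\setminus\{i_1,\ldots,i_k\}$ (counted with multiplicity). Then $$E\left[\binom{X-1}{k}\right]\ge\sum_{1\le i_1<\cdots<i_k\le n}\ \sum_{s=1}^{n-k}W_s(i_1,\ldots,i_k)\frac{k}{(k+s)(k+s-1)}.$$
   Context: Binomial convention: for integers $s,t$, $\binom{t}{s}=0$ if $\min(s,t)<0$ or $s>t$; otherwise $\binom{t}{s}=\frac{t!}{s!(t-s)!}$. $A_{i_1}\cdots A_{i_k}A_j$ denotes the intersection of the events. *)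

theory Defs
  imports "HOL-Probability.Probability"
begin

definition binom_int :: "int \<Rightarrow> int \<Rightarrow> real" where
  "binom_int t s = (if min s t < 0 \<or> s > t then 0 else real (nat t choose nat s))"

definition kth_largest :: "(nat \<Rightarrow> real) \<Rightarrow> nat set \<Rightarrow> nat \<Rightarrow> real" where
  "kth_largest f J s = rev (sort (map f (sorted_list_of_set J))) ! (s - 1)"

end

theory Submission
  imports Defs "HOL-Combinatorics.Permutations"
begin

(* Fix an outcome and let S be the set of the X events that occur. For a k-set I, list the
   remaining indices as \<sigma>_I(1), ..., \<sigma>_I(n-k) in decreasing order of P(A_I A_j), so that the
   right-hand side is the expectation of the sum over I and s of c_s [I \<subseteq> S, \<sigma>_I(s) \<in> S]
   with c_s = k/((k+s)(k+s-1)). For a fixed I \<subseteq> S at most X - k of the \<sigma>_I(s) lie in S,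
   and c_s decreases in s, so the inner sum is at most c_1 + ... + c_(X-k) = (X-k)/X, a
   telescoping sum. Summing over the binom(X,k) sets I \<subseteq> S gives binom(X,k)(X-k)/X =
   binom(X-1,k) pointwise, and integrating proves the inequality. *)

definition weight :: "nat \<Rightarrow> nat \<Rightarrow> real" where
  "weight k s = real k / (real (k + s) * real (k + s - 1))"

lemma weight_nonneg: "0 \<le> weight k s"
  unfolding weight_def by (intro divide_nonneg_nonneg) auto

lemma weight_antimono:
  assumes "1 \<le> a" "a \<le> b"
  shows "weight k b \<le> weight k a"
proof (cases "k = 0")
  case False
  with assms show ?thesis
    unfolding weight_def by (intro divide_left_mono mult_mono mult_pos_pos) auto
qed (simp add: weight_def)

lemma sum_weight_telescope:
  assumes "1 \<le> k"
  shows "(\<Sum>s=1..y. weight k s) = real y / (real k + real y)"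
proof (induction y)
  case (Suc y)
  have pos: "real k + real y > 0" using assms by simp
  have "weight k (Suc y) = real k / ((real k + real y + 1) * (real k + real y))"
    using assms by (simp add: weight_def of_nat_diff)
  then have "(\<Sum>s=1..Suc y. weight k s)
      = real y / (real k + real y) + real k / ((real k + real y + 1) * (real k + real y))"
    using Suc by simp
  also have "\<dots> = real (Suc y) / (real k + real (Suc y))"
  proof -
    have "real y / a + (a - real y) / ((a + 1) * a) = (real y + 1) / (a + 1)" if "a > 0" for a
      using that by (simp add: divide_simps add_pos_pos) (simp add: algebra_simps)
    from this[OF pos] show ?thesis by (simp add: add.commute)
  qed
  finally show ?case .
qed simp

lemma sum_antimono_le_initial_segment:
  fixes c :: "nat \<Rightarrow> real"
  assumes antimono: "\<And>a b. 1 \<le> a \<Longrightarrow> a \<le> b \<Longrightarrow> c b \<le> c a"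
    and "S \<subseteq> {1..m}"
  shows "(\<Sum>s\<in>S. c s) \<le> (\<Sum>s=1..card S. c s)"
  using assms(2)
proof (induction m arbitrary: S)
  case (Suc m)
  show ?case
  proof (cases "Suc m \<in> S")
    case False
    with Suc.prems have "S \<subseteq> {1..m}" by (auto simp: le_Suc_eq)
    then show ?thesis by (rule Suc.IH)
  next
    case True
    define S' where "S' = S - {Suc m}"
    have S': "S' \<subseteq> {1..m}" and "finite S'"
      using Suc.prems by (auto simp: S'_def le_Suc_eq finite_subset)
    have S: "S = insert (Suc m) S'" "Suc m \<notin> S'" using True by (auto simp: S'_def)
    have "card S' \<le> m" using card_mono[OF _ S'] by simp
    have "(\<Sum>s\<in>S. c s) = c (Suc m) + (\<Sum>s\<in>S'. c s)"
      using S \<open>finite S'\<close> by simp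
    also have "\<dots> \<le> c (Suc (card S')) + (\<Sum>s=1..card S'. c s)"
      using Suc.IH[OF S'] antimono[of "Suc (card S')" "Suc m"] \<open>card S' \<le> m\<close> by simp
    also have "\<dots> = (\<Sum>s=1..card S. c s)" using S \<open>finite S'\<close> by simp
    finally show ?thesis .
  qed
qed simp

lemma sum_antimono_hits_le:
  fixes c :: "nat \<Rightarrow> real"
  assumes antimono: "\<And>a b. 1 \<le> a \<Longrightarrow> a \<le> b \<Longrightarrow> c b \<le> c a"
    and nonneg: "\<And>s. 1 \<le> s \<Longrightarrow> 0 \<le> c s"
    and "inj_on \<sigma> {1..m}" and "finite T"
  shows "(\<Sum>s=1..m. c s * of_bool (\<sigma> s \<in> T)) \<le> (\<Sum>s=1..card T. c s)"
proof -
  define S where "S = {1..m} \<inter> {s. \<sigma> s \<in> T}"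
  have "card S \<le> card T"
  proof (rule card_inj_on_le)
    show "inj_on \<sigma> S" using assms(3) by (rule inj_on_subset) (simp add: S_def)
    show "\<sigma> ` S \<subseteq> T" by (auto simp: S_def)
  qed (rule assms(4))
  have "(\<Sum>s=1..m. c s * of_bool (\<sigma> s \<in> T)) = (\<Sum>s\<in>S. c s)"
    unfolding S_def by (simp add: mult.commute)
  also have "\<dots> \<le> (\<Sum>s=1..card S. c s)"
    by (rule sum_antimono_le_initial_segment[OF antimono]) (auto simp: S_def)
  also have "\<dots> \<le> (\<Sum>s=1..card T. c s)"
    using \<open>card S \<le> card T\<close> by (intro sum_mono2) (auto intro: nonneg)
  finally show ?thesis .
qed

lemma sum_weight_hits_le:
  assumes "1 \<le> k" and "inj_on \<sigma> {1..m}" and "finite T"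
  shows "(\<Sum>s=1..m. weight k s * of_bool (\<sigma> s \<in> T)) \<le> real (card T) / (real k + real (card T))"
proof -
  have "(\<Sum>s=1..m. weight k s * of_bool (\<sigma> s \<in> T)) \<le> (\<Sum>s=1..card T. weight k s)"
    using weight_antimono weight_nonneg assms(2,3) by (rule sum_antimono_hits_le)
  also have "\<dots> = real (card T) / (real k + real (card T))"
    using assms(1) by (rule sum_weight_telescope)
  finally show ?thesis .
qed

lemma binom_int_pred_eq:
  assumes "1 \<le> k"
  shows "binom_int (int x - 1) (int k) = real (x choose k) * ((real x - real k) / real x)"
proof (cases "x = 0")
  case False
  have pred: "binom_int (int x - 1) (int k) = real ((x - 1) choose k)"
    using False by (auto simp: binom_int_def nat_diff_distrib)
  show ?thesis
  proof (cases "k \<le> x")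
    case True
    have "real (x - k) * real (x choose k) = real x * real ((x - 1) choose k)"
      by (metis binomial_absorb_comp of_nat_mult)
    with True False show ?thesis unfolding pred by (simp add: field_simps of_nat_diff)
  qed (simp add: pred binomial_eq_0)
qed (use assms in \<open>simp add: binom_int_def\<close>)

lemma sum_weight_hits_le_binom_int:
  fixes N S :: "nat set" and \<sigma> :: "nat set \<Rightarrow> nat \<Rightarrow> nat"
  assumes "finite N" and "S \<subseteq> N" and "1 \<le> k"
    and enum: "\<And>I. I \<subseteq> N \<Longrightarrow> card I = k \<Longrightarrow> bij_betw (\<sigma> I) {1..m} (N - I)"
  shows "(\<Sum>I | I \<subseteq> N \<and> card I = k. \<Sum>s=1..m. weight k s * of_bool (I \<subseteq> S \<and> \<sigma> I s \<in> S))
           \<le> binom_int (int (card S) - 1) (int k)"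
proof -
  define v where "v = (real (card S) - real k) / real (card S)"
  have "finite S" using assms(1,2) by (rule finite_subset[rotated])
  have "(\<Sum>s=1..m. weight k s * of_bool (I \<subseteq> S \<and> \<sigma> I s \<in> S)) \<le> of_bool (I \<subseteq> S) * v"
    if I: "I \<subseteq> N" "card I = k" for I
  proof (cases "I \<subseteq> S")
    case True
    have "\<sigma> I s \<notin> I" if "s \<in> {1..m}" for s
      using enum[OF I] that by (auto dest: bij_betwE)
    then have "(\<Sum>s=1..m. weight k s * of_bool (I \<subseteq> S \<and> \<sigma> I s \<in> S))
               = (\<Sum>s=1..m. weight k s * of_bool (\<sigma> I s \<in> S - I))"
      using True by (intro sum.cong) auto
    also have "\<dots> \<le> real (card (S - I)) / (real k + real (card (S - I)))"
      using enum[OF I] \<open>finite S\<close> assms(3) by (intro sum_weight_hits_le) (auto simp: bij_betw_def)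
    also have "\<dots> = of_bool (I \<subseteq> S) * v"
    proof -
      have "card (S - I) = card S - k" and "k \<le> card S"
        using True I \<open>finite S\<close> by (auto simp: card_Diff_subset card_mono finite_subset)
      with True show ?thesis by (simp add: v_def of_nat_diff)
    qed
    finally show ?thesis .
  qed (simp add: v_def)
  then have "(\<Sum>I | I \<subseteq> N \<and> card I = k. \<Sum>s=1..m. weight k s * of_bool (I \<subseteq> S \<and> \<sigma> I s \<in> S))
      \<le> (\<Sum>I | I \<subseteq> N \<and> card I = k. of_bool (I \<subseteq> S) * v)"
    by (intro sum_mono) simp
  also have "\<dots> = real (card {I. I \<subseteq> S \<and> card I = k}) * v"
  proof -
    have "finite {I. I \<subseteq> N \<and> card I = k}"
      using assms(1) by (auto intro: finite_subset[of _ "Pow N"])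
    moreover have "{I. I \<subseteq> N \<and> card I = k} \<inter> {I. I \<subseteq> S} = {I. I \<subseteq> S \<and> card I = k}"
      using assms(2) by auto
    ultimately show ?thesis by simp
  qed
  also have "\<dots> = binom_int (int (card S) - 1) (int k)"
    using assms(3) \<open>finite S\<close> by (simp add: n_subsets binom_int_pred_eq v_def)
  finally show ?thesis .
qed

lemma kth_largest_enumeration:
  assumes "finite J"
  obtains \<sigma> where "bij_betw \<sigma> {1..card J} J"
    and "\<And>s. s \<in> {1..card J} \<Longrightarrow> kth_largest f J s = f (\<sigma> s)"
proof -
  define L where "L = sorted_list_of_set J"
  have "mset (rev (sort (map f L))) = mset (map f L)" by simp
  then obtain q where q: "q permutes {..<length L}" "permute_list q (map f L) = rev (sort (map f L))"
    by (metis length_map mset_eq_permutation)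
  have len: "length L = card J" unfolding L_def by simp
  have "bij_betw ((!) L \<circ> q \<circ> (\<lambda>s. s - 1)) {1..card J} J"
  proof (intro bij_betw_trans)
    show "bij_betw (\<lambda>s. s - 1) {1..card J} {..<length L}"
      unfolding len by (rule bij_betw_byWitness[where f' = Suc]) auto
    show "bij_betw q {..<length L} {..<length L}" using q(1) by (rule permutes_imp_bij)
    show "bij_betw ((!) L) {..<length L} J"
      using assms by (intro bij_betw_nth) (simp_all add: L_def)
  qed
  moreover have "kth_largest f J s = f (((!) L \<circ> q \<circ> (\<lambda>s. s - 1)) s)" if "s \<in> {1..card J}" for s
  proof -
    have lt: "s - 1 < length (map f L)" using that len by auto
    have "kth_largest f J s = permute_list q (map f L) ! (s - 1)"
      unfolding kth_largest_def L_def[symmetric] q(2) ..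
    also have "\<dots> = map f L ! q (s - 1)"
      using q(1) lt by (simp add: permute_list_nth)
    also have "\<dots> = f (L ! q (s - 1))"
      using permutes_in_image[OF q(1)] lt by simp
    finally show ?thesis by simp
  qed
  ultimately show ?thesis using that by blast
qed

lemma (in prob_space) expectation_sum_scaled_indicators:
  assumes "finite T" "\<And>t. t \<in> T \<Longrightarrow> E t \<in> events"
  shows "integrable M (\<lambda>\<omega>. \<Sum>t\<in>T. c t * indicator (E t) \<omega>)"
    and "expectation (\<lambda>\<omega>. \<Sum>t\<in>T. c t * indicator (E t) \<omega>) = (\<Sum>t\<in>T. c t * prob (E t))"
proof -
  have "integrable M (\<lambda>\<omega>. c t * indicator (E t) \<omega> :: real)" if "t \<in> T" for t
    using assms(2)[OF that] by (simp add: emeasure_eq_measure)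
  then show "integrable M (\<lambda>\<omega>. \<Sum>t\<in>T. c t * indicator (E t) \<omega>)"
    by (rule Bochner_Integration.integrable_sum)
  then show "expectation (\<lambda>\<omega>. \<Sum>t\<in>T. c t * indicator (E t) \<omega>) = (\<Sum>t\<in>T. c t * prob (E t))"
    using assms by (subst Bochner_Integration.integral_sum) (auto simp: emeasure_eq_measure)
qed

lemma (in prob_space) integrable_fun_card_occurring:
  fixes h :: "nat \<Rightarrow> real"
  assumes "finite N" "\<And>i. i \<in> N \<Longrightarrow> A i \<in> events"
  shows "integrable M (\<lambda>\<omega>. h (card {i \<in> N. \<omega> \<in> A i}))"
proof (rule integrable_const_bound)
  have "(\<lambda>\<omega>. \<Sum>i\<in>N. of_bool (\<omega> \<in> A i) :: nat) \<in> M \<rightarrow>\<^sub>M count_space UNIV"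
    using assms by measurable
  then have "(\<lambda>\<omega>. card {i \<in> N. \<omega> \<in> A i}) \<in> M \<rightarrow>\<^sub>M count_space UNIV"
    using assms(1) by (simp add: Int_def flip: sum.inter_filter)
  then show "(\<lambda>\<omega>. h (card {i \<in> N. \<omega> \<in> A i})) \<in> borel_measurable M"
    by (rule measurable_compose) simp
  show "AE \<omega> in M. norm (h (card {i \<in> N. \<omega> \<in> A i})) \<le> (\<Sum>x\<le>card N. \<bar>h x\<bar>)"
  proof (rule AE_I2)
    fix \<omega>
    have "card {i \<in> N. \<omega> \<in> A i} \<le> card N"
      using assms(1) by (intro card_mono) auto
    then show "norm (h (card {i \<in> N. \<omega> \<in> A i})) \<le> (\<Sum>x\<le>card N. \<bar>h x\<bar>)"
      by (auto intro!: member_le_sum)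
  qed
qed

lemma (in prob_space) sum_weighted_hits_le_expectation_binom_int:
  fixes A :: "nat \<Rightarrow> 'a set" and \<sigma> :: "nat set \<Rightarrow> nat \<Rightarrow> nat"
  assumes "finite N" and events: "\<And>i. i \<in> N \<Longrightarrow> A i \<in> events" and "1 \<le> k"
    and enum: "\<And>I. I \<subseteq> N \<Longrightarrow> card I = k \<Longrightarrow> bij_betw (\<sigma> I) {1..m} (N - I)"
  shows "(\<Sum>I | I \<subseteq> N \<and> card I = k. \<Sum>s=1..m. weight k s * prob ((\<Inter>i\<in>I. A i) \<inter> A (\<sigma> I s)))
           \<le> expectation (\<lambda>\<omega>. binom_int (int (card {i \<in> N. \<omega> \<in> A i}) - 1) (int k))"
proof -
  define II where "II = {I. I \<subseteq> N \<and> card I = k}"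
  define T where "T = II \<times> {1..m}"
  define E where "E = (\<lambda>(I, s). (\<Inter>i\<in>I. A i) \<inter> A (\<sigma> I s))"
  have range: "\<sigma> I s \<in> N - I" if "I \<in> II" "s \<in> {1..m}" for I s
    using that bij_betwE[OF enum, of I] by (simp add: II_def)
  have "finite T"
    using assms(1) by (auto simp: T_def II_def intro: finite_subset[of _ "Pow N"])
  have sum_T: "(\<Sum>t\<in>T. f t) = (\<Sum>I\<in>II. \<Sum>s=1..m. f (I, s))" for f :: "nat set \<times> nat \<Rightarrow> real"
    by (simp add: T_def sum.cartesian_product)
  have E_events: "E t \<in> events" if "t \<in> T" for t
  proof -
    obtain I s where t: "t = (I, s)" "I \<in> II" "s \<in> {1..m}" using \<open>t \<in> T\<close> by (auto simp: T_def)
    then have "I \<noteq> {}" "finite I" "I \<subseteq> N" using assms(1,3) by (auto simp: II_def finite_subset)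
    then show ?thesis using events range[OF t(2,3)] by (auto simp: t E_def intro!: sets.Int sets.finite_INT)
  qed
  have "(\<Sum>I | I \<subseteq> N \<and> card I = k. \<Sum>s=1..m. weight k s * prob ((\<Inter>i\<in>I. A i) \<inter> A (\<sigma> I s)))
        = (\<Sum>t\<in>T. weight k (snd t) * prob (E t))"
    by (simp add: sum_T II_def E_def)
  also have "\<dots> = expectation (\<lambda>\<omega>. \<Sum>t\<in>T. weight k (snd t) * indicator (E t) \<omega>)"
    using \<open>finite T\<close> E_events by (rule expectation_sum_scaled_indicators(2)[symmetric])
  also have "\<dots> \<le> expectation (\<lambda>\<omega>. binom_int (int (card {i \<in> N. \<omega> \<in> A i}) - 1) (int k))"
  proof (rule integral_mono)
    show "integrable M (\<lambda>\<omega>. \<Sum>t\<in>T. weight k (snd t) * indicator (E t) \<omega>)"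
      using \<open>finite T\<close> E_events by (rule expectation_sum_scaled_indicators(1))
    show "integrable M (\<lambda>\<omega>. binom_int (int (card {i \<in> N. \<omega> \<in> A i}) - 1) (int k))"
      using assms(1) events by (rule integrable_fun_card_occurring)
    fix \<omega>
    define S where "S = {i \<in> N. \<omega> \<in> A i}"
    have "(\<Sum>t\<in>T. weight k (snd t) * indicator (E t) \<omega>)
          = (\<Sum>I\<in>II. \<Sum>s=1..m. weight k s * of_bool (I \<subseteq> S \<and> \<sigma> I s \<in> S))"
      unfolding sum_T using range by (intro sum.cong refl) (auto simp: E_def S_def II_def indicator_def)
    also have "\<dots> \<le> binom_int (int (card S) - 1) (int k)"
      unfolding II_def by (rule sum_weight_hits_le_binom_int[OF assms(1) _ assms(3) enum]) (auto simp: S_def)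
    finally show "(\<Sum>t\<in>T. weight k (snd t) * indicator (E t) \<omega>)
        \<le> binom_int (int (card {i \<in> N. \<omega> \<in> A i}) - 1) (int k)"
      by (simp add: S_def)
  qed
  finally show ?thesis .
qed

theorem lemma5:
  fixes M :: "'a measure" and A :: "nat \<Rightarrow> 'a set" and n k :: nat
  assumes "prob_space M"
    and "\<And>i. i \<in> {1..n} \<Longrightarrow> A i \<in> sets M"
    and "1 \<le> k" and "k < n"
  shows "prob_space.expectation M
           (\<lambda>\<omega>. binom_int (int (card {i \<in> {1..n}. \<omega> \<in> A i}) - 1) (int k))
         \<ge> (\<Sum>I | I \<subseteq> {1..n} \<and> card I = k.
              \<Sum>s = 1..n - k. kth_largest (\<lambda>j. measure M ((\<Inter>i\<in>I. A i) \<inter> A j)) ({1..n} - I) s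
                 * (real k / (real (k + s) * real (k + s - 1))))"
proof -
  interpret prob_space M by fact
  define P where "P I = (\<lambda>j. prob ((\<Inter>i\<in>I. A i) \<inter> A j))" for I
  have "\<exists>\<sigma>. bij_betw \<sigma> {1..n - k} ({1..n} - I)
          \<and> (\<forall>s\<in>{1..n - k}. kth_largest (P I) ({1..n} - I) s = P I (\<sigma> s))"
    if "I \<subseteq> {1..n}" "card I = k" for I
  proof -
    have "card ({1..n} - I) = n - k"
      using that by (simp add: card_Diff_subset finite_subset)
    then show ?thesis by (metis kth_largest_enumeration finite_Diff finite_atLeastAtMost)
  qed
  then obtain \<sigma>
    where enum: "\<And>I. I \<subseteq> {1..n} \<Longrightarrow> card I = k \<Longrightarrow> bij_betw (\<sigma> I) {1..n - k} ({1..n} - I)"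
    and kth: "\<And>I s. I \<subseteq> {1..n} \<Longrightarrow> card I = k \<Longrightarrow> s \<in> {1..n - k}
                \<Longrightarrow> kth_largest (P I) ({1..n} - I) s = P I (\<sigma> I s)"
    by metis
  have "(\<Sum>I | I \<subseteq> {1..n} \<and> card I = k. \<Sum>s = 1..n - k.
          kth_largest (P I) ({1..n} - I) s * (real k / (real (k + s) * real (k + s - 1))))
        = (\<Sum>I | I \<subseteq> {1..n} \<and> card I = k. \<Sum>s=1..n - k.
             weight k s * prob ((\<Inter>i\<in>I. A i) \<inter> A (\<sigma> I s)))"
    using kth by (intro sum.cong refl) (simp add: P_def weight_def)
  also have "\<dots> \<le> expectation (\<lambda>\<omega>. binom_int (int (card {i \<in> {1..n}. \<omega> \<in> A i}) - 1) (int k))"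
    using assms(2,3) enum by (intro sum_weighted_hits_le_expectation_binom_int) auto
  finally show ?thesis by (simp add: P_def)
qed

end
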